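(* Let $\varphi$ be a GFG-QPTL formula and $\mathcal X_1,\mathcal X_2\in\mathrm{HAsg}_\supseteq(\mathrm{free}(\varphi))$ with $\mathcal X_1\sqsubseteq\mathcal X_2$. Then $\mathcal X_1\models^{\exists\forall}\varphi$ implies $\mathcal X_2\models^{\exists\forall}\varphi$, and $\mathcal X_2\models^{\forall\exists}\varphi$ implies $\mathcal X_1\models^{\forall\exists}\varphi$.
   Context: Let $AP$ be a set of atomic propositions and $\mathbb B=\{\top,\bot\}$. A temporal valuation is a function $f:\mathbb N\to\mathbb B$. An assignment is a partial function $\chi:AP\rightharpoonup(\mathbb N\to\mathbb B)$; $\mathrm{Asg}$ is the set of all assignments, $\mathrm{Asg}(P)$ the set of assignments with domain exactly $P\subseteq AP$. For an assignment $\chi$, $p\in AP$ and a temporal valuation $f$, $\chi[p\mapsto f]$ is the assignment that agrees with $\chi$ except that it maps $p$ to $f$. A hyperassignment is a set $\mathcal X$ with $\emptyset\neq\mathcal X\subseteq 2^{\mathrm{Asg}(P)}$ and $\emptyset\notin\mathcal X$, for some $P\subseteq AP$; this $P$ is denoted $\mathrm{ap}(\mathcal X)$. $\mathrm{HAsg}$ is the set of all hyperassignments, $\mathrm{HAsg}(P)$ those with $\mathrm{ap}(\mathcal X)=P$, and $\mathrm{HAsg}_\supseteq(P)$ those with $\mathrm{ap}(\mathcal X)\supseteq P$. For $\mathcal X_1,\mathcal X_2\in\mathrm{HAsg}$, $\mathcal X_1\sqsubseteq\mathcal X_2$ iff for every $X_1\in\mathcal X_1$ there is $X_2\in\mathcal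 X_2$ with $X_2\subseteq X_1$. A choice function for $\mathcal X$ is a map $c:\mathcal X\to\mathrm{Asg}$ with $c(X)\in X$ for all $X\in\mathcal X$. The dual of $\mathcal X$ is $\overline{\mathcal X}=\{\mathrm{img}(c): c\text{ a choice function for }\mathcal X\}$. $\mathrm{par}(\mathcal X)$ is the set of pairs $(\mathcal X_1,\mathcal X_2)$ of (possibly empty) subsets of $\mathcal X$ with $\mathcal X_1\cap\mathcal X_2=\emptyset$ and $\mathcal X_1\cup\mathcal X_2=\mathcal X$. A functor over $P\subseteq AP$ is a function $F:\mathrm{Asg}(P)\to(\mathbb N\to\mathbb B)$; $\mathrm{Fnc}(P)$ is the set of all of them. $\mathrm{ext}(\chi,F,p)=\chi[p\mapsto F(\chi)]$ and $\mathrm{ext}(X,F,p)=\{\mathrm{ext}(\chi,F,p):\chi\in X\}$. For $\chi_1,\chi_2\in\mathrm{Asg}(P)$, $p\in P$, $k\in\mathbb N$: $\chi_1\approx^{>k}_p\chi_2$ iff $\chi_1(q)=\chi_2(q)$ for all $q\in P\setminus\{p\}$ and $\chi_1(p)(t)=\chi_2(p)(t)$ for all $t\le k$; $\chi_1\approx^{\ge k}_p\chi_2$ is defined the same way with $t<k$ in place of $t\le k$. $F\in\mathrm{Fnc}(P)$ is behavioral (resp. strongly behavioral) w.r.t. $p\in P$ if $F(\chi_1)(k)=F(\chi_2)(k)$ for all $k\in\mathbb N$ and all $\chi_1,\chi_2$ with $\chi_1\approx^{>k}_p\chi_2$ (resp. $\chi_1\approx^{\ge k}_p\chi_2$). A quantifier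 specification is a pair $\sigma=\langle P_B,P_S\rangle$ of subsets of $AP$; $\mathrm{Fnc}_\sigma(P)$ is the set of $F\in\mathrm{Fnc}(P)$ that are behavioral w.r.t. every $p\in P_B\cap P$ and strongly behavioral w.r.t. every $p\in P_S\cap P$. $\mathrm{ext}_\sigma(\mathcal X,p)=\{\mathrm{ext}(X,F,p):X\in\mathcal X,\ F\in\mathrm{Fnc}_\sigma(\mathrm{ap}(\mathcal X))\}$. GFG-QPTL formulas are generated by $\varphi::=\psi\mid\neg\varphi\mid\varphi\wedge\varphi\mid\varphi\vee\varphi\mid\exists p{:}\sigma.\varphi\mid\forall p{:}\sigma.\varphi$, where $\psi$ is an LTL formula over $AP$, $p\in AP$ and $\sigma$ a quantifier specification; we also write $\exists^\sigma p.\varphi$, $\forall^\sigma p.\varphi$. QPTL formulas are those in which every specification is $\langle\emptyset,\emptyset\rangle$. $\mathrm{free}(\varphi)$ is the set of free propositions. $\chi\models_{LTL}\psi$ iff the infinite word whose $t$-th letter is the valuation $q\mapsto\chi(q)(t)$ satisfies $\psi$ in the standard LTL sense. Alternation flags are $\exists\forall$ and $\forall\exists$; $\bar\alpha$ is the flag different from $\alpha$. For a GFG-QPTL formula $\varphi$, $\mathcal X\in\mathrm{HAsg}_\supseteq(\mathrm{free}(\varphi))$ and flag $\alpha$, $\mathcal X\models^\alpha\varphi$ is defined inductively: (1) for LTL $\psi$: $\mathcal X\models^{\exists\forall}\psi$ iff there is $X\in\mathcal X$ with $\chi\models_{LTL}\psi$ for all $\chi\in X$; $\mathcal X\models^{\forall\exists}\psi$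 iff for every $X\in\mathcal X$ there is $\chi\in X$ with $\chi\models_{LTL}\psi$; (2) $\mathcal X\models^\alpha\neg\phi$ iff not $\mathcal X\models^{\bar\alpha}\phi$; (3) $\mathcal X\models^{\exists\forall}\phi_1\wedge\phi_2$ iff for every $(\mathcal X_1,\mathcal X_2)\in\mathrm{par}(\mathcal X)$, either ($\mathcal X_1\ne\emptyset$ and $\mathcal X_1\models^{\exists\forall}\phi_1$) or ($\mathcal X_2\ne\emptyset$ and $\mathcal X_2\models^{\exists\forall}\phi_2$); $\mathcal X\models^{\forall\exists}\phi_1\wedge\phi_2$ iff $\overline{\mathcal X}\models^{\exists\forall}\phi_1\wedge\phi_2$; (4) $\mathcal X\models^{\forall\exists}\phi_1\vee\phi_2$ iff there is $(\mathcal X_1,\mathcal X_2)\in\mathrm{par}(\mathcal X)$ such that ($\mathcal X_1\neq\emptyset$ implies $\mathcal X_1\models^{\forall\exists}\phi_1$) and ($\mathcal X_2\neq\emptyset$ implies $\mathcal X_2\models^{\forall\exists}\phi_2$); $\mathcal X\models^{\exists\forall}\phi_1\vee\phi_2$ iff $\overline{\mathcal X}\models^{\forall\exists}\phi_1\vee\phi_2$; (5) $\mathcal X\models^{\exists\forall}\exists p{:}\sigma.\phi$ iff $\mathrm{ext}_\sigma(\mathcal X,p)\models^{\exists\forall}\phi$; $\mathcal X\models^{\forall\exists}\exists p{:}\sigma.\phi$ iff $\overline{\mathcal X}\models^{\exists\forall}\exists p{:}\sigma.\phi$; (6) $\mathcal X\models^{\forall\exists}\forall p{:}\sigma.\phi$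 iff $\mathrm{ext}_\sigma(\mathcal X,p)\models^{\forall\exists}\phi$; $\mathcal X\models^{\exists\forall}\forall p{:}\sigma.\phi$ iff $\overline{\mathcal X}\models^{\forall\exists}\forall p{:}\sigma.\phi$. *)

theory Defs
  imports Main
begin

datatype 'p ltl =
    LProp 'p
  | LTrue
  | LNot "'p ltl"
  | LAnd "'p ltl" "'p ltl"
  | LOr "'p ltl" "'p ltl"
  | LNext "'p ltl"
  | LUntil "'p ltl" "'p ltl"

fun ltl_sem :: "(nat \<Rightarrow> 'p set) \<Rightarrow> nat \<Rightarrow> 'p ltl \<Rightarrow> bool" where
  "ltl_sem w i (LProp q) = (q \<in> w i)"
| "ltl_sem w i LTrue = True"
| "ltl_sem w i (LNot a) = (\<not> ltl_sem w i a)"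
| "ltl_sem w i (LAnd a b) = (ltl_sem w i a \<and> ltl_sem w i b)"
| "ltl_sem w i (LOr a b) = (ltl_sem w i a \<or> ltl_sem w i b)"
| "ltl_sem w i (LNext a) = ltl_sem w (Suc i) a"
| "ltl_sem w i (LUntil a b) = (\<exists>j\<ge>i. ltl_sem w j b \<and> (\<forall>k. i \<le> k \<and> k < j \<longrightarrow> ltl_sem w k a))"

fun ltl_props :: "'p ltl \<Rightarrow> 'p set" where
  "ltl_props (LProp q) = {q}"
| "ltl_props LTrue = {}"
| "ltl_props (LNot a) = ltl_props a"
| "ltl_props (LAnd a b) = ltl_props a \<union> ltl_props b"
| "ltl_props (LOr a b) = ltl_props a \<union> ltl_props b"
| "ltl_props (LNext a) = ltl_props a"
| "ltl_props (LUntil a b) = ltl_props a \<union> ltl_props b"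

type_synonym tval = "nat \<Rightarrow> bool"
type_synonym 'p asg = "'p \<rightharpoonup> tval"
type_synonym 'p hasg = "'p asg set set"

definition Asg :: "'p set \<Rightarrow> 'p asg set" where
  "Asg P = {\<chi>. dom \<chi> = P}"

definition word_of :: "'p asg \<Rightarrow> nat \<Rightarrow> 'p set" where
  "word_of \<chi> t = {q. \<exists>f. \<chi> q = Some f \<and> f t}"

definition models_ltl :: "'p asg \<Rightarrow> 'p ltl \<Rightarrow> bool" where
  "models_ltl \<chi> \<psi> = ltl_sem (word_of \<chi>) 0 \<psi>"

definition is_hasg :: "'p hasg \<Rightarrow> bool" where
  "is_hasg X \<longleftrightarrow> X \<noteq> {} \<and> {} \<notin> X \<and> (\<exists>P. \<forall>S\<in>X. S \<subseteq> Asg P)"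

definition ap :: "'p hasg \<Rightarrow> 'p set" where
  "ap X = (THE P. \<forall>S\<in>X. S \<subseteq> Asg P)"

definition HAsg_sup :: "'p set \<Rightarrow> 'p hasg set" where
  "HAsg_sup P = {X. is_hasg X \<and> P \<subseteq> ap X}"

definition hleq :: "'p hasg \<Rightarrow> 'p hasg \<Rightarrow> bool" (infix "\<sqsubseteq>\<^sub>H" 50) where
  "X1 \<sqsubseteq>\<^sub>H X2 \<longleftrightarrow> (\<forall>S1\<in>X1. \<exists>S2\<in>X2. S2 \<subseteq> S1)"

text \<open>Dual: images of choice functions (a choice function is only relevant on \<open>X\<close>).\<close>
definition dual :: "'p hasg \<Rightarrow> 'p hasg" where
  "dual X = {c ` X | c. \<forall>S\<in>X. c S \<in> S}"

definition par :: "'a set \<Rightarrow> ('a set \<times> 'a set) set" where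
  "par X = {(X1, X2). X1 \<subseteq> X \<and> X2 \<subseteq> X \<and> X1 \<inter> X2 = {} \<and> X1 \<union> X2 = X}"

text \<open>A functor over \<open>P\<close> is represented by a total function; only its values on \<open>Asg P\<close> matter.\<close>
definition agree_gt :: "'p set \<Rightarrow> 'p \<Rightarrow> nat \<Rightarrow> 'p asg \<Rightarrow> 'p asg \<Rightarrow> bool" where
  "agree_gt P p k \<chi>1 \<chi>2 \<longleftrightarrow> (\<forall>q\<in>P - {p}. \<chi>1 q = \<chi>2 q) \<and> (\<forall>t\<le>k. the (\<chi>1 p) t = the (\<chi>2 p) t)"

definition agree_ge :: "'p set \<Rightarrow> 'p \<Rightarrow> nat \<Rightarrow> 'p asg \<Rightarrow> 'p asg \<Rightarrow> bool" where
  "agree_ge P p k \<chi>1 \<chi>2 \<longleftrightarrow> (\<forall>q\<in>P - {p}. \<chi>1 q = \<chi>2 q) \<and> (\<forall>t<k. the (\<chi>1 p) t = the (\<chi>2 p) t)"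

definition behavioral :: "'p set \<Rightarrow> 'p \<Rightarrow> ('p asg \<Rightarrow> tval) \<Rightarrow> bool" where
  "behavioral P p F \<longleftrightarrow> (\<forall>k \<chi>1 \<chi>2. \<chi>1 \<in> Asg P \<longrightarrow> \<chi>2 \<in> Asg P \<longrightarrow> agree_gt P p k \<chi>1 \<chi>2 \<longrightarrow> F \<chi>1 k = F \<chi>2 k)"

definition strongly_behavioral :: "'p set \<Rightarrow> 'p \<Rightarrow> ('p asg \<Rightarrow> tval) \<Rightarrow> bool" where
  "strongly_behavioral P p F \<longleftrightarrow> (\<forall>k \<chi>1 \<chi>2. \<chi>1 \<in> Asg P \<longrightarrow> \<chi>2 \<in> Asg P \<longrightarrow> agree_ge P p k \<chi>1 \<chi>2 \<longrightarrow> F \<chi>1 k = F \<chi>2 k)"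

type_synonym 'p qspec = "'p set \<times> 'p set"

definition Fnc_sigma :: "'p qspec \<Rightarrow> 'p set \<Rightarrow> ('p asg \<Rightarrow> tval) set" where
  "Fnc_sigma \<sigma> P = {F. (\<forall>p\<in>fst \<sigma> \<inter> P. behavioral P p F) \<and> (\<forall>p\<in>snd \<sigma> \<inter> P. strongly_behavioral P p F)}"

definition ext_asg :: "'p asg \<Rightarrow> ('p asg \<Rightarrow> tval) \<Rightarrow> 'p \<Rightarrow> 'p asg" where
  "ext_asg \<chi> F p = \<chi>(p \<mapsto> F \<chi>)"

definition ext_set :: "'p asg set \<Rightarrow> ('p asg \<Rightarrow> tval) \<Rightarrow> 'p \<Rightarrow> 'p asg set" where
  "ext_set S F p = {ext_asg \<chi> F p | \<chi>. \<chi> \<in> S}"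

definition ext_sigma :: "'p qspec \<Rightarrow> 'p hasg \<Rightarrow> 'p \<Rightarrow> 'p hasg" where
  "ext_sigma \<sigma> X p = {ext_set S F p | S F. S \<in> X \<and> F \<in> Fnc_sigma \<sigma> (ap X)}"

datatype 'p gfg =
    GLTL "'p ltl"
  | GNeg "'p gfg"
  | GAnd "'p gfg" "'p gfg"
  | GOr "'p gfg" "'p gfg"
  | GEx 'p "'p qspec" "'p gfg"
  | GAll 'p "'p qspec" "'p gfg"

fun free :: "'p gfg \<Rightarrow> 'p set" where
  "free (GLTL \<psi>) = ltl_props \<psi>"
| "free (GNeg a) = free a"
| "free (GAnd a b) = free a \<union> free b"
| "free (GOr a b) = free a \<union> free b"
| "free (GEx p \<sigma> a) = free a - {p}"
| "free (GAll p \<sigma> a) = free a - {p}"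

datatype flag = EA | AE

fun flip :: "flag \<Rightarrow> flag" where
  "flip EA = AE" | "flip AE = EA"

primrec sat :: "'p gfg \<Rightarrow> flag \<Rightarrow> 'p hasg \<Rightarrow> bool" where
  "sat (GLTL \<psi>) \<alpha> X =
     (case \<alpha> of EA \<Rightarrow> (\<exists>S\<in>X. \<forall>\<chi>\<in>S. models_ltl \<chi> \<psi>)
               | AE \<Rightarrow> (\<forall>S\<in>X. \<exists>\<chi>\<in>S. models_ltl \<chi> \<psi>))"
| "sat (GNeg a) \<alpha> X = (\<not> sat a (flip \<alpha>) X)"
| "sat (GAnd a b) \<alpha> X =
     (let H = (\<lambda>Y. \<forall>(Y1, Y2)\<in>par Y. (Y1 \<noteq> {} \<and> sat a EA Y1) \<or> (Y2 \<noteq> {} \<and> sat b EA Y2))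
      in case \<alpha> of EA \<Rightarrow> H X | AE \<Rightarrow> H (dual X))"
| "sat (GOr a b) \<alpha> X =
     (let H = (\<lambda>Y. \<exists>(Y1, Y2)\<in>par Y. (Y1 \<noteq> {} \<longrightarrow> sat a AE Y1) \<and> (Y2 \<noteq> {} \<longrightarrow> sat b AE Y2))
      in case \<alpha> of AE \<Rightarrow> H X | EA \<Rightarrow> H (dual X))"
| "sat (GEx p \<sigma> a) \<alpha> X =
     (case \<alpha> of EA \<Rightarrow> sat a EA (ext_sigma \<sigma> X p)
               | AE \<Rightarrow> sat a EA (ext_sigma \<sigma> (dual X) p))"
| "sat (GAll p \<sigma> a) \<alpha> X =
     (case \<alpha> of AE \<Rightarrow> sat a AE (ext_sigma \<sigma> X p)
               | EA \<Rightarrow> sat a AE (ext_sigma \<sigma> (dual X) p))"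

end

theory Submission
  imports Defs
begin

text \<open>Induction on \<open>\<phi>\<close>, proving simultaneously that \<open>\<exists>\<forall>\<close>-satisfaction is upward closed and
  \<open>\<forall>\<exists>\<close>-satisfaction downward closed along \<open>\<sqsubseteq>\<close>; negation swaps the two. Dualisation reverses
  \<open>\<sqsubseteq>\<close>: composing a choice function for \<open>\<X>\<^sub>2\<close> with a refinement map \<open>\<X>\<^sub>1 \<rightarrow> \<X>\<^sub>2\<close> gives a choice
  function for \<open>\<X>\<^sub>1\<close> with smaller image. Extension by a quantified proposition preserves \<open>\<sqsubseteq>\<close>,
  because related hyperassignments have the same propositions and hence the same functors. A
  partition of the larger hyperassignment pulls back to one of the smaller by putting each member
  into the first part that contains a refinement of it.\<close>

lemma ap_eqI:
  assumes "X \<noteq> {}" "{} \<notin> X" "\<forall>S\<in>X. S \<subseteq> Asg P"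
  shows "ap X = P"
  unfolding ap_def
proof (rule the_equality)
  fix P' assume P': "\<forall>S\<in>X. S \<subseteq> Asg P'"
  from assms(1,2) obtain S \<chi> where "S \<in> X" "\<chi> \<in> S"
    by (metis all_not_in_conv)
  with assms(3) P' have "\<chi> \<in> Asg P" "\<chi> \<in> Asg P'" by blast+
  then show "P' = P" by (simp add: Asg_def)
qed (fact assms(3))

lemma is_hasgE:
  assumes "is_hasg X"
  obtains P where "X \<noteq> {}" "{} \<notin> X" "\<forall>S\<in>X. S \<subseteq> Asg P" "ap X = P"
  using assms ap_eqI unfolding is_hasg_def by metis

lemma is_hasg_subset: "is_hasg X \<Longrightarrow> Y \<subseteq> X \<Longrightarrow> Y \<noteq> {} \<Longrightarrow> is_hasg Y"
  unfolding is_hasg_def by blast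

lemma hleq_nonempty: "X1 \<sqsubseteq>\<^sub>H X2 \<Longrightarrow> X1 \<noteq> {} \<Longrightarrow> X2 \<noteq> {}"
  unfolding hleq_def by blast

lemma hleq_ap_eq:
  assumes "is_hasg X1" "is_hasg X2" "X1 \<sqsubseteq>\<^sub>H X2"
  shows "ap X1 = ap X2"
proof -
  from assms(1) obtain P1 where X1: "X1 \<noteq> {}" "\<forall>S\<in>X1. S \<subseteq> Asg P1" "ap X1 = P1"
    by (rule is_hasgE)
  from assms(2) obtain P2 where X2: "{} \<notin> X2" "\<forall>S\<in>X2. S \<subseteq> Asg P2" "ap X2 = P2"
    by (rule is_hasgE)
  from X1(1) assms(3) obtain S1 S2 where "S1 \<in> X1" "S2 \<in> X2" "S2 \<subseteq> S1"
    unfolding hleq_def by blast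
  moreover with X2(1) obtain \<chi> where "\<chi> \<in> S2"
    by (metis all_not_in_conv)
  ultimately have "\<chi> \<in> Asg P1" "\<chi> \<in> Asg P2" using X1(2) X2(2) by blast+
  then show ?thesis using X1(3) X2(3) by (simp add: Asg_def)
qed

lemma is_hasg_dual:
  assumes "is_hasg X"
  shows "is_hasg (dual X)"
proof -
  from assms obtain P where X: "X \<noteq> {}" "{} \<notin> X" "\<forall>S\<in>X. S \<subseteq> Asg P"
    by (rule is_hasgE)
  have "\<forall>S\<in>X. (SOME \<chi>. \<chi> \<in> S) \<in> S"
    using X(2) by (metis ex_in_conv someI_ex)
  then have "(\<lambda>S. SOME \<chi>. \<chi> \<in> S) ` X \<in> dual X"
    unfolding dual_def by blast
  moreover have "{} \<notin> dual X" "\<forall>T\<in>dual X. T \<subseteq> Asg P"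
    using X(1,3) unfolding dual_def by blast+
  ultimately show ?thesis
    unfolding is_hasg_def by blast
qed

lemma hleq_dual:
  assumes "X1 \<sqsubseteq>\<^sub>H X2"
  shows "dual X2 \<sqsubseteq>\<^sub>H dual X1"
  unfolding hleq_def
proof
  from assms obtain g where g: "\<forall>S\<in>X1. g S \<in> X2 \<and> g S \<subseteq> S"
    unfolding hleq_def by metis
  fix T assume "T \<in> dual X2"
  then obtain c where T: "T = c ` X2" and c: "\<forall>S\<in>X2. c S \<in> S"
    unfolding dual_def by blast
  have "(c \<circ> g) ` X1 \<in> dual X1"
    using g c unfolding dual_def by fastforce
  moreover have "(c \<circ> g) ` X1 \<subseteq> T"
    using g T by auto
  ultimately show "\<exists>T'\<in>dual X1. T' \<subseteq> T" by blast
qed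

lemma Fnc_sigma_const: "(\<lambda>_ _. False) \<in> Fnc_sigma \<sigma> P"
  unfolding Fnc_sigma_def behavioral_def strongly_behavioral_def by simp

lemma is_hasg_ext_sigma:
  assumes "is_hasg X"
  shows "is_hasg (ext_sigma \<sigma> X p)"
proof -
  from assms obtain P where X: "X \<noteq> {}" "{} \<notin> X" "\<forall>S\<in>X. S \<subseteq> Asg P"
    by (rule is_hasgE)
  from X(1) obtain S where "S \<in> X" by blast
  then have "ext_sigma \<sigma> X p \<noteq> {}"
    using Fnc_sigma_const unfolding ext_sigma_def by blast
  moreover have "{} \<notin> ext_sigma \<sigma> X p"
    using X(2) by (auto simp: ext_sigma_def ext_set_def)
  moreover have "\<forall>T\<in>ext_sigma \<sigma> X p. T \<subseteq> Asg (insert p P)"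
  proof (intro ballI subsetI)
    fix T \<chi>' assume "T \<in> ext_sigma \<sigma> X p" "\<chi>' \<in> T"
    then obtain S F \<chi> where "S \<in> X" "\<chi> \<in> S" "\<chi>' = \<chi>(p \<mapsto> F \<chi>)"
      unfolding ext_sigma_def ext_set_def ext_asg_def by blast
    moreover from this X(3) have "dom \<chi> = P"
      by (auto simp: Asg_def)
    ultimately show "\<chi>' \<in> Asg (insert p P)"
      by (simp add: Asg_def)
  qed
  ultimately show ?thesis
    unfolding is_hasg_def by blast
qed

lemma hleq_ext_sigma:
  assumes "ap X1 = ap X2" "X1 \<sqsubseteq>\<^sub>H X2"
  shows "ext_sigma \<sigma> X1 p \<sqsubseteq>\<^sub>H ext_sigma \<sigma> X2 p"
  unfolding hleq_def
proof
  fix T assume "T \<in> ext_sigma \<sigma> X1 p"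
  then obtain S F where T: "T = ext_set S F p" and "S \<in> X1" and F: "F \<in> Fnc_sigma \<sigma> (ap X1)"
    unfolding ext_sigma_def by blast
  with assms(2) obtain S2 where S2: "S2 \<in> X2" "S2 \<subseteq> S"
    unfolding hleq_def by blast
  have "ext_set S2 F p \<in> ext_sigma \<sigma> X2 p"
    using S2(1) F assms(1) unfolding ext_sigma_def by auto
  moreover have "ext_set S2 F p \<subseteq> T"
    using S2(2) unfolding T ext_set_def by blast
  ultimately show "\<exists>T'\<in>ext_sigma \<sigma> X2 p. T' \<subseteq> T" by blast
qed

definition upward_closed :: "('p hasg \<Rightarrow> bool) \<Rightarrow> bool" where
  "upward_closed Q \<longleftrightarrow>
     (\<forall>X1 X2. is_hasg X1 \<longrightarrow> is_hasg X2 \<longrightarrow> X1 \<sqsubseteq>\<^sub>H X2 \<longrightarrow> Q X1 \<longrightarrow> Q X2)"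

definition downward_closed :: "('p hasg \<Rightarrow> bool) \<Rightarrow> bool" where
  "downward_closed Q \<longleftrightarrow>
     (\<forall>X1 X2. is_hasg X1 \<longrightarrow> is_hasg X2 \<longrightarrow> X1 \<sqsubseteq>\<^sub>H X2 \<longrightarrow> Q X2 \<longrightarrow> Q X1)"

lemma upward_closed_Not_iff: "upward_closed (\<lambda>X. \<not> Q X) \<longleftrightarrow> downward_closed Q"
  and downward_closed_Not_iff: "downward_closed (\<lambda>X. \<not> Q X) \<longleftrightarrow> upward_closed Q"
  unfolding upward_closed_def downward_closed_def by blast+

lemma upward_closed_dual: "downward_closed Q \<Longrightarrow> upward_closed (\<lambda>X. Q (dual X))"
  and downward_closed_dual: "upward_closed Q \<Longrightarrow> downward_closed (\<lambda>X. Q (dual X))"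
  unfolding upward_closed_def downward_closed_def
  by (meson is_hasg_dual hleq_dual)+

lemma upward_closed_ext_sigma: "upward_closed Q \<Longrightarrow> upward_closed (\<lambda>X. Q (ext_sigma \<sigma> X p))"
  and downward_closed_ext_sigma:
    "downward_closed Q \<Longrightarrow> downward_closed (\<lambda>X. Q (ext_sigma \<sigma> X p))"
  unfolding upward_closed_def downward_closed_def
  by (meson is_hasg_ext_sigma hleq_ext_sigma hleq_ap_eq)+

definition par_forall :: "('p hasg \<Rightarrow> bool) \<Rightarrow> ('p hasg \<Rightarrow> bool) \<Rightarrow> 'p hasg \<Rightarrow> bool" where
  "par_forall Q R Y \<longleftrightarrow> (\<forall>(Y1, Y2)\<in>par Y. (Y1 \<noteq> {} \<and> Q Y1) \<or> (Y2 \<noteq> {} \<and> R Y2))"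

definition par_exists :: "('p hasg \<Rightarrow> bool) \<Rightarrow> ('p hasg \<Rightarrow> bool) \<Rightarrow> 'p hasg \<Rightarrow> bool" where
  "par_exists Q R Y \<longleftrightarrow> (\<exists>(Y1, Y2)\<in>par Y. (Y1 \<noteq> {} \<longrightarrow> Q Y1) \<and> (Y2 \<noteq> {} \<longrightarrow> R Y2))"

lemma is_hasg_par:
  "is_hasg Y \<Longrightarrow> (Y1, Y2) \<in> par Y \<Longrightarrow> (Y1 \<noteq> {} \<longrightarrow> is_hasg Y1) \<and> (Y2 \<noteq> {} \<longrightarrow> is_hasg Y2)"
  unfolding par_def by (blast intro: is_hasg_subset)

lemma par_pullback:
  assumes "X \<sqsubseteq>\<^sub>H Y" "(Y1, Y2) \<in> par Y"
  obtains X1 X2 where "(X1, X2) \<in> par X" "X1 \<sqsubseteq>\<^sub>H Y1" "X2 \<sqsubseteq>\<^sub>H Y2"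
proof
  let ?X1 = "{S\<in>X. \<exists>T\<in>Y1. T \<subseteq> S}"
  show "(?X1, X - ?X1) \<in> par X" "?X1 \<sqsubseteq>\<^sub>H Y1"
    unfolding par_def hleq_def by blast+
  show "X - ?X1 \<sqsubseteq>\<^sub>H Y2"
    using assms unfolding hleq_def par_def by blast
qed

lemma upward_closed_par_forall:
  assumes Q: "upward_closed Q" and R: "upward_closed R"
  shows "upward_closed (par_forall Q R)"
  unfolding upward_closed_def
proof (intro allI impI)
  fix X Y assume X: "is_hasg X" and Y: "is_hasg Y" and "X \<sqsubseteq>\<^sub>H Y"
    and sat: "par_forall Q R X"
  show "par_forall Q R Y"
    unfolding par_forall_def
  proof (clarify)
    fix Y1 Y2 assume part: "(Y1, Y2) \<in> par Y" and not2: "\<not> (Y2 \<noteq> {} \<and> R Y2)"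
    from \<open>X \<sqsubseteq>\<^sub>H Y\<close> part obtain X1 X2 where part': "(X1, X2) \<in> par X" "X1 \<sqsubseteq>\<^sub>H Y1" "X2 \<sqsubseteq>\<^sub>H Y2"
      by (rule par_pullback)
    note hasg = is_hasg_par[OF X part'(1)] is_hasg_par[OF Y part]
    from sat part'(1) have "(X1 \<noteq> {} \<and> Q X1) \<or> (X2 \<noteq> {} \<and> R X2)"
      unfolding par_forall_def by blast
    then show "Y1 \<noteq> {} \<and> Q Y1"
    proof
      assume "X1 \<noteq> {} \<and> Q X1"
      moreover from this part'(2) have "Y1 \<noteq> {}" using hleq_nonempty by blast
      ultimately show ?thesis
        using Q hasg part'(2) unfolding upward_closed_def by blast
    next
      assume "X2 \<noteq> {} \<and> R X2"
      moreover from this part'(3) have "Y2 \<noteq> {}" using hleq_nonempty by blast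
      ultimately have "R Y2"
        using R hasg part'(3) unfolding upward_closed_def by blast
      with not2 \<open>Y2 \<noteq> {}\<close> show ?thesis by blast
    qed
  qed
qed

lemma downward_closed_par_exists:
  assumes Q: "downward_closed Q" and R: "downward_closed R"
  shows "downward_closed (par_exists Q R)"
  unfolding downward_closed_def
proof (intro allI impI)
  fix X Y assume X: "is_hasg X" and Y: "is_hasg Y" and "X \<sqsubseteq>\<^sub>H Y"
    and "par_exists Q R Y"
  then obtain Y1 Y2 where part: "(Y1, Y2) \<in> par Y"
    and sat: "Y1 \<noteq> {} \<longrightarrow> Q Y1" "Y2 \<noteq> {} \<longrightarrow> R Y2"
    unfolding par_exists_def by blast
  from \<open>X \<sqsubseteq>\<^sub>H Y\<close> part obtain X1 X2 where part': "(X1, X2) \<in> par X" "X1 \<sqsubseteq>\<^sub>H Y1" "X2 \<sqsubseteq>\<^sub>H Y2"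
    by (rule par_pullback)
  note hasg = is_hasg_par[OF X part'(1)] is_hasg_par[OF Y part]
  have "Q X1" if "X1 \<noteq> {}"
  proof -
    from part'(2) that have "Y1 \<noteq> {}" by (rule hleq_nonempty)
    then show ?thesis
      using Q sat(1) hasg part'(2) that unfolding downward_closed_def by blast
  qed
  moreover have "R X2" if "X2 \<noteq> {}"
  proof -
    from part'(3) that have "Y2 \<noteq> {}" by (rule hleq_nonempty)
    then show ?thesis
      using R sat(2) hasg part'(3) that unfolding downward_closed_def by blast
  qed
  ultimately show "par_exists Q R X"
    using part'(1) unfolding par_exists_def by blast
qed

lemma sat_GAnd:
  "sat (GAnd a b) EA = par_forall (sat a EA) (sat b EA)"
  "sat (GAnd a b) AE = (\<lambda>X. par_forall (sat a EA) (sat b EA) (dual X))"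
  by (simp_all add: fun_eq_iff par_forall_def)

lemma sat_GOr:
  "sat (GOr a b) AE = par_exists (sat a AE) (sat b AE)"
  "sat (GOr a b) EA = (\<lambda>X. par_exists (sat a AE) (sat b AE) (dual X))"
  by (simp_all add: fun_eq_iff par_exists_def)

lemma sat_quantifier:
  "sat (GEx p \<sigma> a) EA = (\<lambda>X. sat a EA (ext_sigma \<sigma> X p))"
  "sat (GEx p \<sigma> a) AE = (\<lambda>X. sat a EA (ext_sigma \<sigma> (dual X) p))"
  "sat (GAll p \<sigma> a) AE = (\<lambda>X. sat a AE (ext_sigma \<sigma> X p))"
  "sat (GAll p \<sigma> a) EA = (\<lambda>X. sat a AE (ext_sigma \<sigma> (dual X) p))"
  by (simp_all add: fun_eq_iff)

lemma sat_GLTL_closed: "upward_closed (sat (GLTL \<psi>) EA) \<and> downward_closed (sat (GLTL \<psi>) AE)"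
proof
  show "upward_closed (sat (GLTL \<psi>) EA)"
    unfolding upward_closed_def hleq_def
  proof (intro allI impI)
    fix X1 X2
    assume "\<forall>S1\<in>X1. \<exists>S2\<in>X2. S2 \<subseteq> S1" and "sat (GLTL \<psi>) EA X1"
    then obtain S T where "T \<in> X2" "T \<subseteq> S" "\<forall>\<chi>\<in>S. models_ltl \<chi> \<psi>"
      by auto
    then show "sat (GLTL \<psi>) EA X2"
      by auto
  qed
  show "downward_closed (sat (GLTL \<psi>) AE)"
    unfolding downward_closed_def hleq_def
  proof (intro allI impI)
    fix X1 X2
    assume le: "\<forall>S1\<in>X1. \<exists>S2\<in>X2. S2 \<subseteq> S1" and sat: "sat (GLTL \<psi>) AE X2"
    have "\<exists>\<chi>\<in>S. models_ltl \<chi> \<psi>" if "S \<in> X1" for S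
    proof -
      from le that obtain T where "T \<in> X2" "T \<subseteq> S" by blast
      with sat show ?thesis by auto
    qed
    then show "sat (GLTL \<psi>) AE X1"
      by simp
  qed
qed

lemma sat_closed: "upward_closed (sat \<phi> EA) \<and> downward_closed (sat \<phi> AE)"
proof (induction \<phi>)
  case (GLTL \<psi>)
  show ?case by (rule sat_GLTL_closed)
next
  case (GNeg a)
  then show ?case
    by (simp add: upward_closed_Not_iff downward_closed_Not_iff)
next
  case (GAnd a b)
  then have "upward_closed (par_forall (sat a EA) (sat b EA))"
    by (blast intro: upward_closed_par_forall)
  then show ?case
    unfolding sat_GAnd using downward_closed_dual by blast
next
  case (GOr a b)
  then have "downward_closed (par_exists (sat a AE) (sat b AE))"
    by (blast intro: downward_closed_par_exists)
  then show ?case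
    unfolding sat_GOr using upward_closed_dual by blast
next
  case (GEx p \<sigma> a)
  then have "upward_closed (\<lambda>X. sat a EA (ext_sigma \<sigma> X p))"
    by (blast intro: upward_closed_ext_sigma)
  then show ?case
    unfolding sat_quantifier using downward_closed_dual by blast
next
  case (GAll p \<sigma> a)
  then have "downward_closed (\<lambda>X. sat a AE (ext_sigma \<sigma> X p))"
    by (blast intro: downward_closed_ext_sigma)
  then show ?case
    unfolding sat_quantifier using upward_closed_dual by blast
qed

theorem mainTheorem8:
  fixes \<phi> :: "'p gfg" and X1 X2 :: "'p hasg"
  assumes "X1 \<in> HAsg_sup (free \<phi>)" and "X2 \<in> HAsg_sup (free \<phi>)"
    and "X1 \<sqsubseteq>\<^sub>H X2"
  shows "(sat \<phi> EA X1 \<longrightarrow> sat \<phi> EA X2) \<and> (sat \<phi> AE X2 \<longrightarrow> sat \<phi> AE X1)"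
  using sat_closed[of \<phi>] assms
  unfolding upward_closed_def downward_closed_def HAsg_sup_def by blast

end
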